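(* Fix integers $m\geq3$, $1\leq\ell\leq m-1$, and an integer $1\leq j\leq\frac{m+2}{2}$, and regard $d_{\ell,j}(a)$ and $e_j(a)$ as functions of $a=(a_1,\dots,a_{m-1})\in\mathbb C^{m-1}$. Then: (i) $d_{\ell,j}(a)$ and $e_j(a)$ are polynomials in $a_1,\dots,a_j$; (ii) $d_{\ell,j}(a)$ and $e_j(a)$ do not depend on $a_{j+1},\dots,a_{m-1}$; (iii) if $(j-1)\ell$ is a multiple of $m$, then $d_{\ell,j}(a)\equiv0$ and $e_j(a)$ does not depend on $a_j$; (iv) if $(j-1)\ell$ is not a multiple of $m$, then $d_{\ell,j}(a)$ and $e_j(a)$ depend linearly on $a_j$.
   Context: Multi-index notation: $\alpha\in(\mathbb N\cup\{0\})^{m-1}$, $\beta=(1,\dots,m-1)$, $|\alpha|=\sum\alpha_i$, $\alpha!=\prod\alpha_i!$, $a^\alpha=\prod a_i^{\alpha_i}$, $\alpha\cdot\beta=\sum i\alpha_i$; ${x\choose k}$ is the generalized binomial coefficient. For $1\leq k\leq j\leq\frac{m+2}{2}$, $b_{j,k}(a)={\frac12\choose k}\sum_{|\alpha|=k,\,\alpha\cdot\beta=j}\frac{k!}{\alpha!}a^\alpha$. $K_{m,j,k}=-\frac2m$ if $j=k=1$; $K_{m,j,k}=-\frac{2k-1}{m+2-2j}B\left(k-\frac{j-1}{m},\frac12+\frac{j-1}{m}\right)$ if $1\leq k\leq j\leq\frac{m+1}{2}$, $j\neq1$ ($B$ the beta function); $K_{m,j,k}=\frac2m\left(\ln2-\frac11-\frac13-\cdots-\frac1{2k-3}\right)$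 if $m$ is even and $1\leq k\leq j=\frac{m+2}{2}$ (empty sum for $k=1$). $\eta_{m,\ell}(a)=(-1)^{\frac{\ell-1}{2}}\frac{4\pi i}{m}\sum_{k=1}^{\frac{m+2}{2}}b_{\frac{m+2}{2},k}(a)$ if $m$ is even and $\ell$ odd, and $0$ otherwise. $d_{\ell,0}(a)=2i\sqrt\pi\sin\left(\frac{\ell\pi}{m}\right)\frac{\Gamma(1+\frac1m)}{\Gamma(\frac32+\frac1m)}$; for $1\leq j\leq\frac{m+1}{2}$, $d_{\ell,j}(a)=-4i\sum_{k=1}^j(-1)^{(\ell+1)k}K_{m,j,k}b_{j,k}(a)\sin\left(\frac{(j-1)\ell\pi}{m}\right)\cos\left(\frac{(j-1)\pi}{m}\right)$; for $j=\frac{m+2}{2}$ ($m$ even), $d_{\ell,j}(a)=\eta_{m,\ell}(a)$. $e_1(a)=0$ and, for $2\leq j\leq\frac{m+2}{2}$, $e_j(a)=-\frac{2m}{m+2}\Big(\frac{d_{\ell,j}(a)}{d_{\ell,0}(a)}+\sum_{|\alpha|=k\geq2,\ \alpha\cdot\beta=j}{\frac12+\frac1m\choose k}\frac{k!}{\alpha!}e(a)^\alpha+\sum_{r=2}^{j-2}\frac{d_{\ell,r}(a)}{d_{\ell,0}(a)}\sum_{|\alpha|=k,\ \alpha\cdot\beta=j-r}{\frac12+\frac{1-r}{m}\choose k}\frac{k!}{\alpha!}e(a)^\alpha\Big)$, where $e(a)^\alpha=\prod_ie_i(a)^{\alpha_i}$ (only $e_i$ with $i<j$ occur). These $e_j(a)$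 are the coefficients in the asymptotic expansion $\lambda_n=\lambda_{n,0}+\sum_{j=2}^{\lfloor\frac{m+2}{2}\rfloor}e_j(a)\lambda_{n,0}^{1-j/m}+o(\lambda_{n,0}^{1-\frac1m\lfloor\frac{m+2}{2}\rfloor})$ of the eigenvalues of $-u''+[(-1)^\ell(iz)^m-P(iz)]u=\lambda u$, $P(z)=a_1z^{m-1}+\cdots+a_{m-1}z$, with decay along the rays $\arg z=-\frac\pi2\pm\frac{(\ell+1)\pi}{m+2}$. *)

theory Defs
  imports "HOL-Analysis.Analysis"
begin

text \<open>Coefficient vectors a = (a_1,...,a_{m-1}) are represented as functions
  nat => complex; only the values at 1..m-1 are used by the definitions below.\<close>

definition multi_idx :: "nat \<Rightarrow> nat \<Rightarrow> (nat \<Rightarrow> nat) set" where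
  "multi_idx m j = {\<alpha>. (\<forall>i. \<alpha> i \<noteq> 0 \<longrightarrow> i \<in> {1..m-1}) \<and> (\<Sum>i\<in>{1..m-1}. i * \<alpha> i) = j}"

definition abs_idx :: "nat \<Rightarrow> (nat \<Rightarrow> nat) \<Rightarrow> nat" where
  "abs_idx m \<alpha> = (\<Sum>i\<in>{1..m-1}. \<alpha> i)"

definition fact_idx :: "nat \<Rightarrow> (nat \<Rightarrow> nat) \<Rightarrow> complex" where
  "fact_idx m \<alpha> = (\<Prod>i\<in>{1..m-1}. fact (\<alpha> i))"

definition pow_idx :: "nat \<Rightarrow> (nat \<Rightarrow> complex) \<Rightarrow> (nat \<Rightarrow> nat) \<Rightarrow> complex" where
  "pow_idx m a \<alpha> = (\<Prod>i\<in>{1..m-1}. a i ^ \<alpha> i)"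

definition bcoef :: "nat \<Rightarrow> nat \<Rightarrow> nat \<Rightarrow> (nat \<Rightarrow> complex) \<Rightarrow> complex" where
  "bcoef m j k a = ((1/2 :: complex) gchoose k) *
     (\<Sum>\<alpha>\<in>{\<alpha>\<in>multi_idx m j. abs_idx m \<alpha> = k}. fact k / fact_idx m \<alpha> * pow_idx m a \<alpha>)"

text \<open>K_{m,j,k} (value 0 outside the stated ranges, where it is not defined)\<close>
definition Kc :: "nat \<Rightarrow> nat \<Rightarrow> nat \<Rightarrow> real" where
  "Kc m j k =
    (if j = 1 \<and> k = 1 then - 2 / real m
     else if 1 \<le> k \<and> k \<le> j \<and> 2 * j \<le> m + 1 \<and> j \<noteq> 1 then
       - (2 * real k - 1) / (real m + 2 - 2 * real j) *
         Beta (real k - (real j - 1) / real m) (1/2 + (real j - 1) / real m)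
     else if even m \<and> 1 \<le> k \<and> k \<le> j \<and> 2 * j = m + 2 then
       2 / real m * (ln 2 - (\<Sum>i\<in>{1..<k}. 1 / (2 * real i - 1)))
     else 0)"

definition eta :: "nat \<Rightarrow> nat \<Rightarrow> (nat \<Rightarrow> complex) \<Rightarrow> complex" where
  "eta m l a = (if even m \<and> odd l then
     (-1) ^ ((l - 1) div 2) * (4 * of_real pi * \<i> / of_nat m) *
       (\<Sum>k\<in>{1..(m+2) div 2}. bcoef m ((m+2) div 2) k a)
     else 0)"

text \<open>d_{l,j}(a) (value 0 outside 0 <= j <= (m+2)/2)\<close>
definition dcoef :: "nat \<Rightarrow> nat \<Rightarrow> nat \<Rightarrow> (nat \<Rightarrow> complex) \<Rightarrow> complex" where
  "dcoef m l j a =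
    (if j = 0 then
       2 * \<i> * of_real (sqrt pi) * of_real (sin (real l * pi / real m)) *
         of_real (Gamma (1 + 1 / real m) / Gamma (3/2 + 1 / real m))
     else if 2 * j \<le> m + 1 then
       - 4 * \<i> * (\<Sum>k\<in>{1..j}. (-1) ^ ((l + 1) * k) * of_real (Kc m j k) * bcoef m j k a *
          of_real (sin ((real j - 1) * real l * pi / real m)) *
          of_real (cos ((real j - 1) * pi / real m)))
     else if even m \<and> 2 * j = m + 2 then eta m l a
     else 0)"

text \<open>One step of the recursion for e_j, given the previously computed values f i = e_i(a), i < j.\<close>
definition estep :: "nat \<Rightarrow> nat \<Rightarrow> (nat \<Rightarrow> complex) \<Rightarrow> (nat \<Rightarrow> complex) \<Rightarrow> nat \<Rightarrow> complex" where
  "estep m l a f j =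
    (if j < 2 then 0 else
      - (2 * of_nat m / (of_nat m + 2)) *
        (dcoef m l j a / dcoef m l 0 a
         + (\<Sum>\<alpha>\<in>{\<alpha>\<in>multi_idx m j. 2 \<le> abs_idx m \<alpha>}.
              ((1/2 + 1 / of_nat m :: complex) gchoose (abs_idx m \<alpha>)) *
              fact (abs_idx m \<alpha>) / fact_idx m \<alpha> * pow_idx m f \<alpha>)
         + (\<Sum>r\<in>{2..j-2}. dcoef m l r a / dcoef m l 0 a *
              (\<Sum>\<alpha>\<in>multi_idx m (j - r).
                 ((1/2 + (1 - of_nat r) / of_nat m :: complex) gchoose (abs_idx m \<alpha>)) *
                 fact (abs_idx m \<alpha>) / fact_idx m \<alpha> * pow_idx m f \<alpha>))))"

primrec etab :: "nat \<Rightarrow> nat \<Rightarrow> (nat \<Rightarrow> complex) \<Rightarrow> nat \<Rightarrow> (nat \<Rightarrow> complex)" where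
  "etab m l a 0 = (\<lambda>i. 0)"
| "etab m l a (Suc n) = (etab m l a n)(Suc n := estep m l a (etab m l a n) (Suc n))"

definition ecoef :: "nat \<Rightarrow> nat \<Rightarrow> nat \<Rightarrow> (nat \<Rightarrow> complex) \<Rightarrow> complex" where
  "ecoef m l j a = etab m l a j j"

definition poly_in :: "nat set \<Rightarrow> ((nat \<Rightarrow> complex) \<Rightarrow> complex) \<Rightarrow> bool" where
  "poly_in S f \<longleftrightarrow> (\<exists>A c. finite A \<and> (\<forall>\<alpha>\<in>A. \<forall>i. \<alpha> i \<noteq> 0 \<longrightarrow> i \<in> S) \<and>
      (\<forall>a. f a = (\<Sum>\<alpha>\<in>A. c \<alpha> * (\<Prod>i\<in>S. a i ^ \<alpha> i))))"

definition indep_of :: "nat \<Rightarrow> ((nat \<Rightarrow> complex) \<Rightarrow> complex) \<Rightarrow> bool" where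
  "indep_of i f \<longleftrightarrow> (\<forall>a z. f (a(i := z)) = f a)"

definition lin_in :: "nat \<Rightarrow> ((nat \<Rightarrow> complex) \<Rightarrow> complex) \<Rightarrow> bool" where
  "lin_in i f \<longleftrightarrow> (\<exists>c g. c \<noteq> 0 \<and> indep_of i g \<and> (\<forall>a. f a = c * a i + g a))"

end

theory Submission
  imports Defs
begin

text \<open>A multi-index of weight j only uses the letters 1, ..., j, so b_{j,k}(a) is a polynomial in
  a_1, ..., a_j; moreover the only multi-index of weight j using the letter j is j itself, so
  b_{j,1}(a) = a_j/2 while b_{j,k}(a), k >= 2, does not involve a_j. Hence
  d_{l,j}(a) = sum_k w_k b_{j,k}(a) is affine in a_j with slope w_1/2, and the weights w_k all
  vanish when m divides (j-1)l, through the factor sin((j-1)l pi/m), or through the parity of l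
  when j = (m+2)/2; otherwise w_1 is nonzero. In the recursion for e_j every term other than
  d_{l,j}/d_{l,0} involves only e_i, i < j, and d_{l,r}, r <= j-2, which by induction are
  polynomials in a_1, ..., a_{j-1}. So e_j = c d_{l,j} + (terms free of a_j) with c <> 0.\<close>

subsection \<open>Polynomials in finitely many variables\<close>

lemma poly_inE:
  assumes "poly_in S f"
  obtains A c where "finite A" "\<And>\<alpha> i. \<alpha> \<in> A \<Longrightarrow> \<alpha> i \<noteq> 0 \<Longrightarrow> i \<in> S"
    "\<And>a. f a = (\<Sum>\<alpha>\<in>A. c \<alpha> * (\<Prod>i\<in>S. a i ^ \<alpha> i))"
  using assms that unfolding poly_in_def by metis

lemma poly_inI:
  assumes "finite X" "\<And>x i. x \<in> X \<Longrightarrow> p x i \<noteq> 0 \<Longrightarrow> i \<in> S"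
    "\<And>a. f a = (\<Sum>x\<in>X. c x * (\<Prod>i\<in>S. a i ^ p x i))"
  shows "poly_in S f"
  unfolding poly_in_def
proof (intro exI conjI allI)
  show "finite (p ` X)" using assms(1) by simp
  show "\<forall>\<alpha>\<in>p ` X. \<forall>i. \<alpha> i \<noteq> 0 \<longrightarrow> i \<in> S" using assms(2) by auto
  fix a
  have "f a = (\<Sum>\<alpha>\<in>p ` X. \<Sum>x\<in>{x\<in>X. p x = \<alpha>}. c x * (\<Prod>i\<in>S. a i ^ p x i))"
    unfolding assms(3) by (rule sum.image_gen[OF assms(1)])
  also have "\<dots> = (\<Sum>\<alpha>\<in>p ` X. (\<Sum>x\<in>{x\<in>X. p x = \<alpha>}. c x) * (\<Prod>i\<in>S. a i ^ \<alpha> i))"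
    by (rule sum.cong[OF refl]) (simp add: sum_distrib_right)
  finally show "f a = \<dots>" .
qed

lemma poly_in_const: "poly_in S (\<lambda>a. c)"
  by (rule poly_inI[where X="{()}" and p="\<lambda>_ _. 0" and c="\<lambda>_. c"]) auto

lemma poly_in_var:
  assumes "finite S" "i \<in> S"
  shows "poly_in S (\<lambda>a. a i)"
proof (rule poly_inI[where X="{()}" and p="\<lambda>_ k. if k = i then 1 else 0" and c="\<lambda>_. 1"])
  fix a :: "nat \<Rightarrow> complex"
  have "(\<Prod>k\<in>S. a k ^ (if k = i then 1 else 0)) = (\<Prod>k\<in>S. if k = i then a k else 1)"
    by (rule prod.cong) auto
  then show "a i = (\<Sum>x\<in>{()}. 1 * (\<Prod>k\<in>S. a k ^ (if k = i then 1 else 0)))"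
    using assms by simp
qed (use assms in \<open>auto split: if_splits\<close>)

lemma poly_in_add:
  assumes "poly_in S f" "poly_in S g"
  shows "poly_in S (\<lambda>a. f a + g a)"
proof -
  obtain A c where A: "finite A" "\<And>\<alpha> i. \<alpha> \<in> A \<Longrightarrow> \<alpha> i \<noteq> 0 \<Longrightarrow> i \<in> S"
    "\<And>a. f a = (\<Sum>\<alpha>\<in>A. c \<alpha> * (\<Prod>i\<in>S. a i ^ \<alpha> i))" using assms(1) by (rule poly_inE) (rule that)
  obtain B d where B: "finite B" "\<And>\<alpha> i. \<alpha> \<in> B \<Longrightarrow> \<alpha> i \<noteq> 0 \<Longrightarrow> i \<in> S"
    "\<And>a. g a = (\<Sum>\<alpha>\<in>B. d \<alpha> * (\<Prod>i\<in>S. a i ^ \<alpha> i))" using assms(2) by (rule poly_inE) (rule that)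
  show ?thesis
    by (rule poly_inI[where X="A <+> B" and p="case_sum id id" and c="case_sum c d"])
      (use A B in \<open>auto simp: sum.Plus\<close>)
qed

lemma poly_in_mult:
  assumes "poly_in S f" "poly_in S g"
  shows "poly_in S (\<lambda>a. f a * g a)"
proof -
  obtain A c where A: "finite A" "\<And>\<alpha> i. \<alpha> \<in> A \<Longrightarrow> \<alpha> i \<noteq> 0 \<Longrightarrow> i \<in> S"
    "\<And>a. f a = (\<Sum>\<alpha>\<in>A. c \<alpha> * (\<Prod>i\<in>S. a i ^ \<alpha> i))" using assms(1) by (rule poly_inE) (rule that)
  obtain B d where B: "finite B" "\<And>\<alpha> i. \<alpha> \<in> B \<Longrightarrow> \<alpha> i \<noteq> 0 \<Longrightarrow> i \<in> S"
    "\<And>a. g a = (\<Sum>\<alpha>\<in>B. d \<alpha> * (\<Prod>i\<in>S. a i ^ \<alpha> i))" using assms(2) by (rule poly_inE) (rule that)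
  show ?thesis
    by (rule poly_inI[where X="A \<times> B" and p="\<lambda>(\<alpha>, \<beta>) i. \<alpha> i + \<beta> i" and c="\<lambda>(\<alpha>, \<beta>). c \<alpha> * d \<beta>"])
      (use A B in \<open>auto simp: sum_product sum.cartesian_product power_add prod.distrib mult_ac
        intro!: sum.cong\<close>)
qed

lemma poly_in_sum:
  assumes "\<And>x. x \<in> X \<Longrightarrow> poly_in S (F x)"
  shows "poly_in S (\<lambda>a. \<Sum>x\<in>X. F x a)"
proof (cases "finite X")
  case True
  then show ?thesis using assms
    by (induction X rule: finite_induct) (auto intro: poly_in_add poly_in_const)
qed (simp add: poly_in_const)

lemma poly_in_prod:
  assumes "\<And>x. x \<in> X \<Longrightarrow> poly_in S (F x)"
  shows "poly_in S (\<lambda>a. \<Prod>x\<in>X. F x a)"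
proof (cases "finite X")
  case True
  then show ?thesis using assms
    by (induction X rule: finite_induct) (auto intro: poly_in_mult poly_in_const)
qed (simp add: poly_in_const)

lemma poly_in_power: "poly_in S f \<Longrightarrow> poly_in S (\<lambda>a. f a ^ n)"
  by (induction n) (auto intro: poly_in_mult poly_in_const)

lemma poly_in_subset:
  assumes "poly_in S f" "finite T" "S \<subseteq> T"
  shows "poly_in T f"
proof -
  obtain A c where A: "finite A" "\<And>\<alpha> i. \<alpha> \<in> A \<Longrightarrow> \<alpha> i \<noteq> 0 \<Longrightarrow> i \<in> S"
    "\<And>a. f a = (\<Sum>\<alpha>\<in>A. c \<alpha> * (\<Prod>i\<in>S. a i ^ \<alpha> i))" using assms(1) by (rule poly_inE) (rule that)
  have "(\<Prod>i\<in>S. a i ^ \<alpha> i) = (\<Prod>i\<in>T. a i ^ \<alpha> i)" if "\<alpha> \<in> A" for a :: "nat \<Rightarrow> complex" and \<alpha>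
    by (rule prod.mono_neutral_left[OF assms(2,3)]) (use A(2) that in force)
  then show ?thesis
    using A assms(3) by (intro poly_inI[of A _ T f c]) (auto intro!: sum.cong simp del: prod_constant)
qed

lemma indep_of_if_poly_in:
  assumes "poly_in S f" "i \<notin> S"
  shows "indep_of i f"
proof -
  obtain A c where A: "\<And>a. f a = (\<Sum>\<alpha>\<in>A. c \<alpha> * (\<Prod>i\<in>S. a i ^ \<alpha> i))"
    using assms(1) by (rule poly_inE) (rule that)
  have upd: "(\<Prod>k\<in>S. (a(i := z)) k ^ \<alpha> k) = (\<Prod>k\<in>S. a k ^ \<alpha> k)" for a z \<alpha>
    by (rule prod.cong) (use assms(2) in auto)
  show ?thesis unfolding indep_of_def A upd by simp
qed

lemma lin_in_affine:
  assumes "lin_in i f" "c \<noteq> 0" "indep_of i g"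
  shows "lin_in i (\<lambda>a. c * f a + g a)"
proof -
  obtain b h where "b \<noteq> 0" "indep_of i h" "\<And>a. f a = b * a i + h a"
    using assms(1) unfolding lin_in_def by blast
  then show ?thesis
    using assms(2,3) unfolding lin_in_def indep_of_def
    by (intro exI[of _ "c * b"] exI[of _ "\<lambda>a. c * h a + g a"]) (simp add: algebra_simps)
qed

subsection \<open>Multi-indices and the coefficients b_{j,k}\<close>

lemma multi_idx_supportD:
  assumes "\<alpha> \<in> multi_idx m j" "\<alpha> i \<noteq> 0"
  shows "i \<in> {1..m-1}" "i \<le> j"
proof -
  show i: "i \<in> {1..m-1}" using assms unfolding multi_idx_def by auto
  have "i \<le> i * \<alpha> i" using assms(2) by simp
  also have "\<dots> \<le> (\<Sum>k\<in>{1..m-1}. k * \<alpha> k)" by (rule member_le_sum[OF i]) auto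
  also have "\<dots> = j" using assms(1) unfolding multi_idx_def by simp
  finally show "i \<le> j" .
qed

lemma multi_idx_abs_idx_eq_1:
  assumes "\<alpha> \<in> multi_idx m j" "\<alpha> j \<noteq> 0"
  shows "abs_idx m \<alpha> = 1"
proof -
  let ?S = "{1..m-1}"
  have j: "j \<in> ?S" using multi_idx_supportD[OF assms] by simp
  have "j = (\<Sum>k\<in>?S. k * \<alpha> k)" using assms(1) unfolding multi_idx_def by simp
  also have "\<dots> = j * \<alpha> j + (\<Sum>k\<in>?S-{j}. k * \<alpha> k)" by (rule sum.remove[OF _ j]) simp
  finally have "j = j * \<alpha> j + (\<Sum>k\<in>?S-{j}. k * \<alpha> k)" .
  moreover have "j \<le> j * \<alpha> j" using assms(2) by simp
  ultimately have "j * \<alpha> j = j * 1" and rest: "(\<Sum>k\<in>?S-{j}. k * \<alpha> k) = 0" by linarith+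
  then have "\<alpha> j = 1" using j by simp
  moreover have "(\<Sum>k\<in>?S-{j}. \<alpha> k) = 0" using rest by simp
  moreover have "abs_idx m \<alpha> = \<alpha> j + (\<Sum>k\<in>?S-{j}. \<alpha> k)"
    unfolding abs_idx_def by (rule sum.remove[OF _ j]) simp
  ultimately show ?thesis by simp
qed

lemma multi_idx_abs_idx_1:
  assumes "j \<in> {1..m-1}"
  shows "{\<alpha> \<in> multi_idx m j. abs_idx m \<alpha> = 1} = {\<lambda>i. if i = j then 1 else 0}"
proof -
  let ?S = "{1..m-1}" and ?\<delta> = "\<lambda>i0 i::nat. if i = i0 then 1 else 0 :: nat"
  have weight_\<delta>: "(\<Sum>k\<in>?S. k * ?\<delta> i0 k) = i0" and abs_\<delta>: "(\<Sum>k\<in>?S. ?\<delta> i0 k) = 1"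
    if "i0 \<in> ?S" for i0
  proof -
    have "(\<Sum>k\<in>?S. k * ?\<delta> i0 k) = (\<Sum>k\<in>?S. if k = i0 then k else 0)" by (rule sum.cong) auto
    then show "(\<Sum>k\<in>?S. k * ?\<delta> i0 k) = i0" using that by simp
    show "(\<Sum>k\<in>?S. ?\<delta> i0 k) = 1" using that by simp
  qed
  have "\<alpha> = ?\<delta> j" if \<alpha>: "\<alpha> \<in> multi_idx m j" "abs_idx m \<alpha> = 1" for \<alpha>
  proof -
    obtain i0 where i0: "i0 \<in> ?S" "\<alpha> i0 = 1" "\<And>k. k \<in> ?S \<Longrightarrow> k \<noteq> i0 \<Longrightarrow> \<alpha> k = 0"
      using \<alpha>(2) sum_eq_1_iff[of ?S \<alpha>] unfolding abs_idx_def by auto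
    have "\<alpha> = ?\<delta> i0"
    proof
      fix k
      have "\<alpha> k \<noteq> 0 \<Longrightarrow> k \<in> ?S" using \<alpha>(1) unfolding multi_idx_def by blast
      then have "k \<noteq> i0 \<Longrightarrow> \<alpha> k = 0" using i0(3) by blast
      then show "\<alpha> k = ?\<delta> i0 k" using i0(2) by simp
    qed
    moreover have "j = i0"
      using \<alpha>(1) weight_\<delta>[OF i0(1)] unfolding multi_idx_def \<open>\<alpha> = ?\<delta> i0\<close> by simp
    ultimately show ?thesis by simp
  qed
  moreover have "?\<delta> j \<in> multi_idx m j" "abs_idx m (?\<delta> j) = 1"
    using assms weight_\<delta>[OF assms] abs_\<delta>[OF assms] unfolding multi_idx_def abs_idx_def by auto
  ultimately show ?thesis by blast
qed

lemma pow_idx_cong: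
  assumes "\<And>i. i \<in> {1..m-1} \<Longrightarrow> \<alpha> i \<noteq> 0 \<Longrightarrow> f i = g i"
  shows "pow_idx m f \<alpha> = pow_idx m g \<alpha>"
  unfolding pow_idx_def
proof (rule prod.cong[OF refl])
  fix i assume "i \<in> {1..m-1}"
  then show "f i ^ \<alpha> i = g i ^ \<alpha> i" using assms by (cases "\<alpha> i = 0") auto
qed

lemma poly_in_pow_idx:
  assumes "\<And>i. i \<in> {1..m-1} \<Longrightarrow> \<alpha> i \<noteq> 0 \<Longrightarrow> poly_in S (E i)"
  shows "poly_in S (\<lambda>a. pow_idx m (\<lambda>i. E i a) \<alpha>)"
  unfolding pow_idx_def
proof (rule poly_in_prod)
  fix i assume "i \<in> {1..m-1}"
  then show "poly_in S (\<lambda>a. E i a ^ \<alpha> i)"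
    using assms by (cases "\<alpha> i = 0") (auto intro: poly_in_power poly_in_const)
qed

lemma bcoef_poly_in: "poly_in {1..j} (bcoef m j k)"
proof -
  have "poly_in {1..j} (\<lambda>a. pow_idx m (\<lambda>i. a i) \<alpha>)" if "\<alpha> \<in> multi_idx m j" for \<alpha>
    by (rule poly_in_pow_idx) (use multi_idx_supportD[OF that] in \<open>auto intro!: poly_in_var\<close>)
  then show ?thesis
    unfolding bcoef_def by (intro poly_in_mult[OF poly_in_const] poly_in_sum) (simp add: mult.assoc)
qed

lemma bcoef_indep_of:
  assumes "2 \<le> k"
  shows "indep_of j (bcoef m j k)"
proof -
  have "pow_idx m (a(j := z)) \<alpha> = pow_idx m a \<alpha>"
    if "\<alpha> \<in> multi_idx m j" "abs_idx m \<alpha> = k" for \<alpha> a z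
    using multi_idx_abs_idx_eq_1[OF that(1)] that(2) assms by (intro pow_idx_cong) auto
  then show ?thesis unfolding indep_of_def bcoef_def by (auto intro!: sum.cong)
qed

lemma bcoef_1:
  assumes "j \<in> {1..m-1}"
  shows "bcoef m j 1 a = a j / 2"
proof -
  have "fact_idx m (\<lambda>i. if i = j then 1 else 0) = 1"
    unfolding fact_idx_def by (rule prod.neutral) auto
  moreover have "pow_idx m a (\<lambda>i. if i = j then 1 else 0) = a j"
    unfolding pow_idx_def using assms by (simp add: if_distrib[of "\<lambda>n. _ ^ n"] cong: if_cong)
  ultimately show ?thesis unfolding bcoef_def multi_idx_abs_idx_1[OF assms] by simp
qed

subsection \<open>The coefficients d_{l,j}\<close>

lemma sin_real_pi_div_eq_0_iff:
  assumes "0 < m"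
  shows "sin (real n * pi / real m) = 0 \<longleftrightarrow> m dvd n"
proof
  assume "sin (real n * pi / real m) = 0"
  then obtain i :: int where "real n * pi / real m = of_int i * pi"
    using sin_zero_iff_int2 by blast
  then have "real_of_int (int n) = real_of_int (int m * i)"
    using assms by (simp add: field_simps)
  then have "int m dvd int n" by (simp only: of_int_eq_iff) simp
  then show "m dvd n" by simp
next
  assume "m dvd n"
  then obtain q where "n = m * q" by blast
  then have "real n * pi / real m = pi * of_int (int q)" using assms by simp
  then show "sin (real n * pi / real m) = 0" by (simp only: sin_npi_int)
qed

lemma sin_pred_mult_pi_div_eq_0_iff:
  assumes "0 < m" "1 \<le> j"
  shows "sin ((real j - 1) * real l * pi / real m) = 0 \<longleftrightarrow> m dvd (j - 1) * l"
  using sin_real_pi_div_eq_0_iff[OF assms(1), of "(j - 1) * l"] assms(2) by (simp add: of_nat_diff)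

lemma dvd_pred_mult_iff_even:
  fixes j m l :: nat
  assumes "2 * j = m + 2" "0 < m"
  shows "m dvd (j - 1) * l \<longleftrightarrow> even l"
proof -
  have "m = (j - 1) * 2" "j - 1 \<noteq> 0" using assms by auto
  then show ?thesis using dvd_times_left_cancel_iff[of "j - 1" 2 l] by simp
qed

lemma Kc_1_nonzero:
  assumes "2 \<le> j" "2 * j \<le> m + 1"
  shows "Kc m j 1 \<noteq> 0"
proof -
  have "0 \<le> (real j - 1) / real m" "(real j - 1) / real m < 1"
    using assms by (simp_all add: field_simps)
  then have "Beta (1 - (real j - 1) / real m) (1/2 + (real j - 1) / real m) > 0"
    unfolding Beta_def by (intro divide_pos_pos mult_pos_pos Gamma_real_pos) auto
  moreover have "real m + 2 - 2 * real j > 0" using assms by linarith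
  ultimately show ?thesis unfolding Kc_def using assms by simp
qed

lemma dcoef_0:
  assumes "1 \<le> l" "l < m"
  obtains d where "d \<noteq> 0" "dcoef m l 0 = (\<lambda>_. d)"
proof -
  have "sin (real l * pi / real m) > 0"
    by (rule sin_gt_zero) (use assms in \<open>auto simp: field_simps\<close>)
  moreover have "Gamma (1 + 1 / real m) > 0" "Gamma (3/2 + 1 / real m) > 0"
    using assms by (auto intro!: add_pos_nonneg)
  ultimately show ?thesis by (intro that) (auto simp: dcoef_def fun_eq_iff)
qed

text \<open>The weight of b_{j,k}(a) in d_{l,j}(a) for 1 <= j <= (m+2)/2; the last two branches come
  from eta_{m,l}, the case 2j = m+2.\<close>
definition dweight :: "nat \<Rightarrow> nat \<Rightarrow> nat \<Rightarrow> nat \<Rightarrow> complex" where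
  "dweight m l j k =
    (if 2 * j \<le> m + 1 then
       - 4 * \<i> * (-1) ^ ((l + 1) * k) * of_real (Kc m j k * sin ((real j - 1) * real l * pi / real m)
         * cos ((real j - 1) * pi / real m))
     else if odd l then (-1) ^ ((l - 1) div 2) * (4 * of_real pi * \<i> / of_nat m)
     else 0)"

lemma dcoef_eq_sum_bcoef:
  assumes "1 \<le> j" "2 * j \<le> m + 2"
  shows "dcoef m l j a = (\<Sum>k\<in>{1..j}. dweight m l j k * bcoef m j k a)"
proof (cases "2 * j \<le> m + 1")
  case True
  then show ?thesis
    using assms(1) unfolding dcoef_def dweight_def by (simp add: sum_distrib_left mult_ac)
next
  case False
  then have "2 * j = m + 2" "even m" "(m + 2) div 2 = j" using assms(2) by presburger+
  then show ?thesis
    using False assms(1) unfolding dcoef_def dweight_def eta_def by (simp add: sum_distrib_left)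
qed

lemma dcoef_poly_in: "poly_in {1..j} (dcoef m l j)"
proof -
  consider "j = 0" | "1 \<le> j" "2 * j \<le> m + 2" | "\<not> 2 * j \<le> m + 2" by linarith
  then show ?thesis
  proof cases
    case 1
    then show ?thesis unfolding dcoef_def by (simp add: poly_in_const)
  next
    case 2
    then have "dcoef m l j = (\<lambda>a. \<Sum>k\<in>{1..j}. dweight m l j k * bcoef m j k a)"
      by (simp add: fun_eq_iff dcoef_eq_sum_bcoef)
    then show ?thesis by (simp only:) (intro poly_in_sum poly_in_mult poly_in_const bcoef_poly_in)
  next
    case 3
    then have "dcoef m l j = (\<lambda>_. 0)" by (auto simp: dcoef_def fun_eq_iff)
    then show ?thesis by (simp add: poly_in_const)
  qed
qed

lemma dweight_eq_0:
  assumes "0 < m" "1 \<le> j" "2 * j \<le> m + 2" "m dvd (j - 1) * l"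
  shows "dweight m l j k = 0"
proof (cases "2 * j \<le> m + 1")
  case True
  then show ?thesis
    using assms sin_pred_mult_pi_div_eq_0_iff[of m j l] unfolding dweight_def by simp
next
  case False
  then have "even l" using assms dvd_pred_mult_iff_even[of j m l] by simp
  then show ?thesis using False unfolding dweight_def by simp
qed

lemma dweight_1_nonzero:
  assumes "0 < m" "1 \<le> j" "2 * j \<le> m + 2" "\<not> m dvd (j - 1) * l"
  shows "dweight m l j 1 \<noteq> 0"
proof (cases "2 * j \<le> m + 1")
  case True
  have "j \<noteq> 1" using assms(4) by auto
  then have "Kc m j 1 \<noteq> 0" using Kc_1_nonzero True assms(2) by simp
  moreover have "sin ((real j - 1) * real l * pi / real m) \<noteq> 0"
    using assms sin_pred_mult_pi_div_eq_0_iff[of m j l] by simp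
  moreover have "cos ((real j - 1) * pi / real m) > 0"
  proof (rule cos_gt_zero_pi)
    have "0 \<le> (real j - 1) * pi / real m" using assms(2) by simp
    then show "- (pi / 2) < (real j - 1) * pi / real m" using pi_gt_zero by linarith
    have "real (2 * j) \<le> real (m + 1)" using True by (simp only: of_nat_le_iff)
    then have "2 * (real j - 1) * pi < real m * pi" by (intro mult_strict_right_mono) auto
    then show "(real j - 1) * pi / real m < pi / 2" using assms(1) by (simp add: field_simps)
  qed
  ultimately show ?thesis using True unfolding dweight_def by simp
next
  case False
  then have "odd l" using assms dvd_pred_mult_iff_even[of j m l] by simp
  then show ?thesis using False assms(1) unfolding dweight_def by simp
qed

lemma lin_in_sum_bcoef:
  assumes "j \<in> {1..m-1}" "w 1 \<noteq> 0"
  shows "lin_in j (\<lambda>a. \<Sum>k\<in>{1..j}. w k * bcoef m j k a)"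
proof -
  have split: "(\<Sum>k\<in>{1..j}. w k * bcoef m j k a) =
      w 1 / 2 * a j + (\<Sum>k\<in>{2..j}. w k * bcoef m j k a)" for a
  proof -
    have "(\<Sum>k\<in>{1..j}. w k * bcoef m j k a) =
        w 1 * bcoef m j 1 a + (\<Sum>k\<in>{Suc 1..j}. w k * bcoef m j k a)"
      by (rule sum.atLeast_Suc_atMost) (use assms(1) in simp)
    then show ?thesis using bcoef_1[OF assms(1), of a] by (simp add: numeral_2_eq_2)
  qed
  have "indep_of j (\<lambda>a. \<Sum>k\<in>{2..j}. w k * bcoef m j k a)"
    using bcoef_indep_of unfolding indep_of_def by (auto intro!: sum.cong)
  then show ?thesis
    unfolding lin_in_def split using assms(2)
    by (intro exI[of _ "w 1 / 2"] exI[of _ "\<lambda>a. \<Sum>k\<in>{2..j}. w k * bcoef m j k a"]) auto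
qed

lemma dcoef_eq_0:
  assumes "0 < m" "1 \<le> j" "2 * j \<le> m + 2" "m dvd (j - 1) * l"
  shows "dcoef m l j a = 0"
  by (simp add: dcoef_eq_sum_bcoef[OF assms(2,3)] dweight_eq_0[OF assms])

lemma dcoef_lin_in:
  assumes "3 \<le> m" "1 \<le> j" "2 * j \<le> m + 2" "\<not> m dvd (j - 1) * l"
  shows "lin_in j (dcoef m l j)"
proof -
  have "dcoef m l j = (\<lambda>a. \<Sum>k\<in>{1..j}. dweight m l j k * bcoef m j k a)"
    using assms(2,3) by (simp add: fun_eq_iff dcoef_eq_sum_bcoef)
  moreover have "j \<in> {1..m-1}" using assms(1-3) by auto
  ultimately show ?thesis using lin_in_sum_bcoef dweight_1_nonzero assms by simp
qed

subsection \<open>The coefficients e_j\<close>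

lemma multi_idx_supportD_less:
  assumes "\<alpha> \<in> multi_idx m j" "2 \<le> abs_idx m \<alpha>" "\<alpha> i \<noteq> 0"
  shows "i < j"
  using multi_idx_supportD(2)[OF assms(1,3)] multi_idx_abs_idx_eq_1[OF assms(1)] assms(2,3)
  by (cases "i = j") auto

text \<open>The terms of the recursion step for e_j other than d_{l,j}/d_{l,0}, with f i in place of
  e_i(a).\<close>
definition erest :: "nat \<Rightarrow> nat \<Rightarrow> (nat \<Rightarrow> complex) \<Rightarrow> (nat \<Rightarrow> complex) \<Rightarrow> nat \<Rightarrow> complex" where
  "erest m l a f j =
     (\<Sum>\<alpha>\<in>{\<alpha>\<in>multi_idx m j. 2 \<le> abs_idx m \<alpha>}.
        ((1/2 + 1 / of_nat m :: complex) gchoose (abs_idx m \<alpha>)) *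
        fact (abs_idx m \<alpha>) / fact_idx m \<alpha> * pow_idx m f \<alpha>)
   + (\<Sum>r\<in>{2..j-2}. dcoef m l r a / dcoef m l 0 a *
        (\<Sum>\<alpha>\<in>multi_idx m (j - r).
           ((1/2 + (1 - of_nat r) / of_nat m :: complex) gchoose (abs_idx m \<alpha>)) *
           fact (abs_idx m \<alpha>) / fact_idx m \<alpha> * pow_idx m f \<alpha>))"

lemma estep_eq_erest:
  "2 \<le> j \<Longrightarrow> estep m l a f j =
     - (2 * of_nat m / (of_nat m + 2)) * (dcoef m l j a / dcoef m l 0 a + erest m l a f j)"
  by (simp add: estep_def erest_def add.assoc)

lemma erest_cong:
  assumes "\<And>i. 1 \<le> i \<Longrightarrow> i < j \<Longrightarrow> f i = g i"
  shows "erest m l a f j = erest m l a g j"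
proof -
  have "pow_idx m f \<alpha> = pow_idx m g \<alpha>" if "\<alpha> \<in> multi_idx m j" "2 \<le> abs_idx m \<alpha>" for \<alpha>
    using multi_idx_supportD_less[OF that] assms by (intro pow_idx_cong) auto
  moreover have "pow_idx m f \<alpha> = pow_idx m g \<alpha>" if "\<alpha> \<in> multi_idx m (j - r)" "2 \<le> r" for \<alpha> r
  proof (rule pow_idx_cong)
    fix i assume "i \<in> {1..m-1}" "\<alpha> i \<noteq> 0"
    moreover from this have "i \<le> j - r" using multi_idx_supportD(2)[OF that(1)] by blast
    ultimately have "1 \<le> i" "i < j" using that(2) by auto
    then show "f i = g i" using assms by blast
  qed
  ultimately show ?thesis unfolding erest_def by (auto intro!: sum.cong)
qed

lemma etab_eq_ecoef: "i \<le> n \<Longrightarrow> etab m l a n i = ecoef m l i a"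
proof (induction n)
  case (Suc n)
  then show ?case by (cases "i = Suc n") (simp_all add: ecoef_def)
qed (simp add: ecoef_def)

lemma ecoef_less_2: "j < 2 \<Longrightarrow> ecoef m l j a = 0"
  by (cases j) (simp_all add: ecoef_def estep_def less_Suc_eq)

lemma ecoef_eq:
  assumes "2 \<le> j"
  shows "ecoef m l j a = - (2 * of_nat m / (of_nat m + 2)) *
    (dcoef m l j a / dcoef m l 0 a + erest m l a (\<lambda>i. ecoef m l i a) j)"
proof -
  obtain n where n: "j = Suc n" using assms by (cases j) auto
  have "ecoef m l j a = estep m l a (etab m l a n) j" by (simp add: ecoef_def n)
  also have "\<dots> = - (2 * of_nat m / (of_nat m + 2)) *
      (dcoef m l j a / dcoef m l 0 a + erest m l a (etab m l a n) j)"
    by (rule estep_eq_erest[OF assms])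
  also have "erest m l a (etab m l a n) j = erest m l a (\<lambda>i. ecoef m l i a) j"
    by (rule erest_cong) (simp add: etab_eq_ecoef n)
  finally show ?thesis .
qed

lemma erest_poly_in:
  assumes "\<And>i. 1 \<le> i \<Longrightarrow> i < j \<Longrightarrow> poly_in {1..j-1} (\<lambda>a. F a i)"
  shows "poly_in {1..j-1} (\<lambda>a. erest m l a (F a) j)"
proof -
  have "poly_in {1..j-1} (\<lambda>a. pow_idx m (F a) \<alpha>)" if "\<alpha> \<in> multi_idx m j" "2 \<le> abs_idx m \<alpha>" for \<alpha>
    using multi_idx_supportD_less[OF that] multi_idx_supportD(1)[OF that(1)] assms
    by (intro poly_in_pow_idx) auto
  moreover have "poly_in {1..j-1} (\<lambda>a. pow_idx m (F a) \<alpha>)" if "\<alpha> \<in> multi_idx m (j - r)" "2 \<le> r" for \<alpha> r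
  proof (rule poly_in_pow_idx)
    fix i assume "i \<in> {1..m-1}" "\<alpha> i \<noteq> 0"
    moreover from this have "i \<le> j - r" using multi_idx_supportD(2)[OF that(1)] by blast
    ultimately have "1 \<le> i" "i < j" using that(2) by auto
    then show "poly_in {1..j-1} (\<lambda>a. F a i)" using assms by blast
  qed
  moreover have "poly_in {1..j-1} (dcoef m l r)" if "r \<le> j - 2" for r
    using that by (intro poly_in_subset[OF dcoef_poly_in]) auto
  moreover have "poly_in {1..j-1} (\<lambda>a. inverse (dcoef m l 0 a))"
    by (simp add: dcoef_def poly_in_const)
  ultimately show ?thesis
    unfolding erest_def divide_inverse[of "dcoef m l _ _"]
    by (intro poly_in_add poly_in_sum poly_in_mult poly_in_const) auto
qed

lemma ecoef_poly_in: "poly_in {1..j} (ecoef m l j)"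
proof (induction j rule: less_induct)
  case (less j)
  show ?case
  proof (cases "j < 2")
    case True
    then show ?thesis using ecoef_less_2 poly_in_const[of _ 0] by (simp add: fun_eq_iff)
  next
    case False
    have "poly_in {1..j-1} (\<lambda>a. erest m l a (\<lambda>i. ecoef m l i a) j)"
      using less by (intro erest_poly_in poly_in_subset[OF less]) auto
    then have "poly_in {1..j} (\<lambda>a. erest m l a (\<lambda>i. ecoef m l i a) j)"
      by (rule poly_in_subset) auto
    moreover have "poly_in {1..j} (\<lambda>a. inverse (dcoef m l 0 a))"
      by (simp add: dcoef_def poly_in_const)
    ultimately show ?thesis
      unfolding ecoef_eq[OF leI[OF False]] divide_inverse[of "dcoef m l j _"]
      by (intro poly_in_mult poly_in_add poly_in_const dcoef_poly_in)
  qed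
qed

lemma ecoef_affine_in_dcoef:
  assumes "1 \<le> l" "l < m" "2 \<le> j"
  obtains c g where "c \<noteq> 0" "indep_of j g" "\<And>a. ecoef m l j a = c * dcoef m l j a + g a"
proof -
  define K :: complex where "K = - (2 * of_nat m / (of_nat m + 2))"
  obtain d where d: "d \<noteq> 0" "dcoef m l 0 = (\<lambda>_. d)" using dcoef_0 assms(1,2) by blast
  have "(of_nat m + 2 :: complex) \<noteq> 0"
    using of_nat_eq_0_iff[of "m + 2", where 'a=complex] by (simp add: add.commute)
  then have K: "K \<noteq> 0" unfolding K_def using assms(2) by simp
  have "poly_in {1..j-1} (\<lambda>a. erest m l a (\<lambda>i. ecoef m l i a) j)"
    by (intro erest_poly_in poly_in_subset[OF ecoef_poly_in]) auto
  then have "indep_of j (\<lambda>a. erest m l a (\<lambda>i. ecoef m l i a) j)"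
    by (rule indep_of_if_poly_in) auto
  show ?thesis
  proof (rule that)
    show "K / d \<noteq> 0" using K d(1) by simp
    show "indep_of j (\<lambda>a. K * erest m l a (\<lambda>i. ecoef m l i a) j)"
      using \<open>indep_of j _\<close> unfolding indep_of_def by simp
    show "ecoef m l j a = K / d * dcoef m l j a + K * erest m l a (\<lambda>i. ecoef m l i a) j" for a
      unfolding ecoef_eq[OF assms(3)] K_def[symmetric] d(2) by (simp add: algebra_simps)
  qed
qed

lemma ecoef_indep_of_if_dvd:
  assumes "1 \<le> l" "l < m" "1 \<le> j" "2 * j \<le> m + 2" "m dvd (j - 1) * l"
  shows "indep_of j (ecoef m l j)"
proof (cases "j < 2")
  case True
  then show ?thesis unfolding indep_of_def by (simp add: ecoef_less_2)
next
  case False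
  then obtain c g where "indep_of j g" "\<And>a. ecoef m l j a = c * dcoef m l j a + g a"
    using ecoef_affine_in_dcoef[OF assms(1,2)] by (metis not_less)
  then show ?thesis using dcoef_eq_0[of m j l] assms unfolding indep_of_def by simp
qed

lemma ecoef_lin_in:
  assumes "3 \<le> m" "1 \<le> l" "l < m" "1 \<le> j" "2 * j \<le> m + 2" "\<not> m dvd (j - 1) * l"
  shows "lin_in j (ecoef m l j)"
proof -
  have "2 \<le> j" using assms(4,6) by (cases "j = 1") auto
  then obtain c g
    where "c \<noteq> 0" "indep_of j g" "ecoef m l j = (\<lambda>a. c * dcoef m l j a + g a)"
    using ecoef_affine_in_dcoef[OF assms(2,3)] by (metis ext)
  moreover have "lin_in j (dcoef m l j)" using dcoef_lin_in assms(1,4-6) by blast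
  ultimately show ?thesis using lin_in_affine by simp
qed

theorem corollary5:
  fixes m l j :: nat
  assumes "m \<ge> 3" and "1 \<le> l" and "l \<le> m - 1" and "1 \<le> j" and "2 * j \<le> m + 2"
  shows "poly_in {1..j} (dcoef m l j) \<and> poly_in {1..j} (ecoef m l j)
    \<and> (\<forall>i\<in>{j+1..m-1}. indep_of i (dcoef m l j) \<and> indep_of i (ecoef m l j))
    \<and> (m dvd (j - 1) * l \<longrightarrow> (\<forall>a. dcoef m l j a = 0) \<and> indep_of j (ecoef m l j))
    \<and> (\<not> m dvd (j - 1) * l \<longrightarrow> lin_in j (dcoef m l j) \<and> lin_in j (ecoef m l j))"
proof (intro conjI ballI impI allI)
  have m: "0 < m" "l < m" using assms(1-3) by auto
  show "poly_in {1..j} (dcoef m l j)" "poly_in {1..j} (ecoef m l j)"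
    by (rule dcoef_poly_in ecoef_poly_in)+
  show "indep_of i (dcoef m l j)" "indep_of i (ecoef m l j)" if "i \<in> {j+1..m-1}" for i
    using that by (auto intro: indep_of_if_poly_in dcoef_poly_in ecoef_poly_in)
  show "dcoef m l j a = 0" "indep_of j (ecoef m l j)" if "m dvd (j - 1) * l" for a
    using that m assms(2,4,5) by (auto intro: dcoef_eq_0 ecoef_indep_of_if_dvd)
  show "lin_in j (dcoef m l j)" "lin_in j (ecoef m l j)" if "\<not> m dvd (j - 1) * l"
    using that m assms(1,2,4,5) by (auto intro: dcoef_lin_in ecoef_lin_in)
qed

end
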